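(* Assume there exists $\theta>0$ with $\psi(\theta)=\log E\exp(\theta X_1)<\infty$. Fix $\epsilon\in(0,\mu)$ and, for the $s$-th system, let $$\kappa(A)=\inf\{k\ge1:\ |A_{n+1}|\ge n(\mu-\epsilon)/s\ \text{for all } n\ge k\}.$$ Then $E\kappa(A)=O(s)$ as $s\to\infty$.
   Context: Let $(X_n)_{n\ge1}$ be i.i.d. strictly positive interarrival times with mean $\mu\in(0,\infty)$. For $s\in\{1,2,\dots\}$, the arrival epochs of the $s$-th system form a time-stationary renewal process on $\mathbb R$ with interarrival times distributed as $X_1/s$; the epochs in $(-\infty,0]$, counted backwards from $0$, are $0\ge A_1>A_2>\cdots$ with $A_n-A_{n+1}=X_n/s$, where $|A_1|$ has the stationary-excess distribution of $X_1/s$ and is independent of $(X_n)$. $\inf\emptyset=\infty$. *)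

theory Defs
  imports "HOL-Probability.Probability"
begin

text \<open>Density of the stationary-excess (equilibrium) distribution of a nonnegative
  random variable Z with finite positive mean: x maps to P(Z > x) / E Z on [0, infinity).\<close>
definition stat_excess_density :: "'a measure \<Rightarrow> ('a \<Rightarrow> real) \<Rightarrow> real \<Rightarrow> ennreal" where
  "stat_excess_density M Z x =
     (if 0 \<le> x then ennreal (measure M {\<omega> \<in> space M. Z \<omega> > x} / integral\<^sup>L M Z) else 0)"

text \<open>Arrival epochs of the s-th system, counted backwards from 0 (index n \<ge> 1):
  A_1 = - Y s, and A_n - A_(n+1) = X_n / s. The paper's X_1, X_2, ... are X 0, X 1, ...
  here, and Y s is the paper's |A_1| for the s-th system.\<close>
definition arrival :: "(nat \<Rightarrow> 'a \<Rightarrow> real) \<Rightarrow> (nat \<Rightarrow> 'a \<Rightarrow> real) \<Rightarrow> nat \<Rightarrow> nat \<Rightarrow> 'a \<Rightarrow> real" where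
  "arrival X Y s n \<omega> = - Y s \<omega> - (\<Sum>i<n - 1. X i \<omega>) / real s"

text \<open>kappa(A) = inf {k \<ge> 1 : |A_(n+1)| \<ge> n (mu - eps) / s for all n \<ge> k}, with inf of the
  empty set = infinity (top of ennreal).\<close>
definition kappa :: "(nat \<Rightarrow> 'a \<Rightarrow> real) \<Rightarrow> (nat \<Rightarrow> 'a \<Rightarrow> real) \<Rightarrow> real \<Rightarrow> real \<Rightarrow> nat \<Rightarrow> 'a \<Rightarrow> ennreal" where
  "kappa X Y \<mu> \<epsilon> s \<omega> =
     (INF k \<in> {k::nat. 1 \<le> k \<and> (\<forall>n\<ge>k. \<bar>arrival X Y s (n + 1) \<omega>\<bar> \<ge> real n * (\<mu> - \<epsilon>) / real s)}.
        of_nat k)"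

end

theory Submission
  imports Defs
begin

text \<open>Since \<open>|A\<^sub>n\<^sub>+\<^sub>1| \<ge> S\<^sub>n / s\<close> with \<open>S\<^sub>n = X\<^sub>1 + \<dots> + X\<^sub>n\<close>, \<open>\<kappa>(A)\<close> is at most one more than the
  last \<open>n\<close> with \<open>S\<^sub>n < n(\<mu> - \<epsilon>)\<close>, whatever \<open>s\<close> and \<open>A\<^sub>1\<close> are. Bounding \<open>n\<close> times the indicator of
  that event by \<open>n exp(\<theta>(n(\<mu> - \<epsilon>) - S\<^sub>n))\<close> and using independence gives
  \<open>E \<kappa>(A) \<le> 1 + \<Sum> n \<rho>\<^sup>n\<close> with \<open>\<rho> = exp(\<theta>(\<mu> - \<epsilon>)) E exp(-\<theta>X\<^sub>1)\<close>. For positive \<open>X\<^sub>1\<close>,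
  \<open>E exp(-\<theta>X\<^sub>1) \<le> exp(-\<theta>\<mu> + \<theta>\<^sup>2 E X\<^sub>1\<^sup>2 / 2)\<close>, so \<open>\<rho> < 1\<close> for small \<open>\<theta> > 0\<close>. Thus \<open>E \<kappa>(A)\<close> is even
  bounded in \<open>s\<close>; the exponential moment only serves to make \<open>E X\<^sub>1\<^sup>2\<close> finite.\<close>

lemma exp_neg_le_Taylor_quadratic:
  fixes x :: real
  assumes "0 \<le> x"
  shows "exp (- x) \<le> 1 - x + x\<^sup>2 / 2"
proof -
  obtain t where "exp (- x) = (\<Sum>m<3. (- x) ^ m / fact m) + exp t / fact 3 * (- x) ^ 3"
    using Maclaurin_exp_le[of "- x" 3] by blast
  moreover have "exp t / fact 3 * (- x) ^ 3 \<le> 0"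
    using assms by (intro mult_nonneg_nonpos) (auto simp: power_odd_eq)
  ultimately show ?thesis
    by (simp add: numeral_3_eq_3 power2_eq_square)
qed

lemma summable_of_nat_mult_power:
  fixes r :: real
  assumes "0 \<le> r" "r < 1"
  shows "summable (\<lambda>n. real n * r ^ n)"
proof -
  have "summable (\<lambda>n. real (Suc n) * r ^ n)"
    using geometric_deriv_sums[of r] assms sums_summable by auto
  then show ?thesis
    by (rule summable_comparison_test'[where N=0]) (use assms in \<open>auto intro: mult_right_mono\<close>)
qed

lemma suminf_of_nat_mult_power_le:
  fixes \<rho> :: ennreal
  assumes "\<rho> \<le> ennreal r" "0 \<le> r" "r < 1"
  shows "(\<Sum>n. of_nat n * \<rho> ^ n) \<le> ennreal (\<Sum>n. real n * r ^ n)"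
proof -
  have "of_nat n * \<rho> ^ n \<le> ennreal (real n * r ^ n)" for n
  proof -
    have "\<rho> ^ n \<le> ennreal (r ^ n)"
      using assms(1,2) by (simp add: ennreal_power[symmetric] power_mono)
    then show ?thesis
      using assms(2) by (simp add: ennreal_mult ennreal_of_nat_eq_real_of_nat mult_left_mono)
  qed
  then have "(\<Sum>n. of_nat n * \<rho> ^ n) \<le> (\<Sum>n. ennreal (real n * r ^ n))"
    by (intro suminf_le summableI)
  also have "\<dots> = ennreal (\<Sum>n. real n * r ^ n)"
    using assms summable_of_nat_mult_power by (intro suminf_ennreal2) auto
  finally show ?thesis .
qed

lemma abs_arrival_ge:
  assumes "0 \<le> Y s \<omega>" "c \<le> (\<Sum>i<n. X i \<omega>)"
  shows "c / real s \<le> \<bar>arrival X Y s (n + 1) \<omega>\<bar>"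
proof -
  have "c / real s \<le> (\<Sum>i<n. X i \<omega>) / real s"
    using assms(2) by (simp add: divide_right_mono)
  also have "\<dots> \<le> - arrival X Y s (n + 1) \<omega>"
    using assms(1) by (simp add: arrival_def)
  finally show ?thesis
    by linarith
qed

lemma kappa_le_of_nat:
  assumes "0 \<le> Y s \<omega>" "1 \<le> k" "\<And>n. k \<le> n \<Longrightarrow> real n * (\<mu> - \<epsilon>) \<le> (\<Sum>i<n. X i \<omega>)"
  shows "kappa X Y \<mu> \<epsilon> s \<omega> \<le> of_nat k"
proof -
  have "real n * (\<mu> - \<epsilon>) / real s \<le> \<bar>arrival X Y s (n + 1) \<omega>\<bar>" if "k \<le> n" for n
    using abs_arrival_ge[of Y s \<omega> "real n * (\<mu> - \<epsilon>)" X n] assms(1) assms(3)[OF that] by blast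
  then show ?thesis
    unfolding kappa_def using assms(2) by (intro INF_lower2[of k]) auto
qed

lemma kappa_le_one_plus_suminf:
  fixes f :: "nat \<Rightarrow> ennreal"
  assumes "0 \<le> Y s \<omega>"
    and "\<And>n. (\<Sum>i<n. X i \<omega>) < real n * (\<mu> - \<epsilon>) \<Longrightarrow> of_nat n \<le> f n"
  shows "kappa X Y \<mu> \<epsilon> s \<omega> \<le> 1 + (\<Sum>n. f n)"
proof (cases "(\<Sum>n. f n) = top")
  case False
  then obtain t where t: "(\<Sum>n. f n) = ennreal t" "0 \<le> t"
    by (cases "\<Sum>n. f n") auto
  \<comment> \<open>an index \<open>n\<close> with \<open>S\<^sub>n < n(\<mu> - \<epsilon>)\<close> has \<open>n \<le> f n \<le> t\<close>, so \<open>k = \<lfloor>t\<rfloor> + 1\<close> works\<close>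
  have "kappa X Y \<mu> \<epsilon> s \<omega> \<le> of_nat (nat \<lfloor>t\<rfloor> + 1)"
  proof (rule kappa_le_of_nat[of Y s \<omega>])
    show "0 \<le> Y s \<omega>"
      by fact
    fix n assume "nat \<lfloor>t\<rfloor> + 1 \<le> n"
    then have "t < real n"
      using t(2) by linarith
    moreover have "of_nat n \<le> ennreal t" if "(\<Sum>i<n. X i \<omega>) < real n * (\<mu> - \<epsilon>)"
      using assms(2)[OF that] sum_le_suminf[OF summableI, of "{n}" f] t(1) by simp
    ultimately show "real n * (\<mu> - \<epsilon>) \<le> (\<Sum>i<n. X i \<omega>)"
      using t(2) by (force simp: ennreal_of_nat_eq_real_of_nat)
  qed simp
  also have "\<dots> \<le> 1 + ennreal t"
    using t(2) by (simp add: ennreal_of_nat_eq_real_of_nat add.commute)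
  finally show ?thesis
    using t(1) by simp
qed simp

lemma kappa_le_Chernoff_sum:
  assumes "0 \<le> Y s \<omega>" "0 \<le> \<theta>"
  shows "kappa X Y \<mu> \<epsilon> s \<omega>
           \<le> 1 + (\<Sum>n. ennreal (real n * exp (\<theta> * (real n * (\<mu> - \<epsilon>) - (\<Sum>i<n. X i \<omega>)))))"
proof (rule kappa_le_one_plus_suminf[of Y s \<omega>])
  show "0 \<le> Y s \<omega>"
    by fact
  fix n assume "(\<Sum>i<n. X i \<omega>) < real n * (\<mu> - \<epsilon>)"
  then have "real n * 1 \<le> real n * exp (\<theta> * (real n * (\<mu> - \<epsilon>) - (\<Sum>i<n. X i \<omega>)))"
    using assms(2) by (intro mult_left_mono) auto
  then show "of_nat n \<le> ennreal (real n * exp (\<theta> * (real n * (\<mu> - \<epsilon>) - (\<Sum>i<n. X i \<omega>))))"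
    by (simp add: ennreal_of_nat_eq_real_of_nat ennreal_leI)
qed

lemma integrable_power2_of_exp_moment:
  fixes Z :: "'a \<Rightarrow> real"
  assumes "Z \<in> borel_measurable M" "\<And>\<omega>. \<omega> \<in> space M \<Longrightarrow> 0 \<le> Z \<omega>"
    and "0 < \<theta>" "integrable M (\<lambda>\<omega>. exp (\<theta> * Z \<omega>))"
  shows "integrable M (\<lambda>\<omega>. (Z \<omega>)\<^sup>2)"
proof (rule Bochner_Integration.integrable_bound)
  show "integrable M (\<lambda>\<omega>. 2 / \<theta>\<^sup>2 * exp (\<theta> * Z \<omega>))"
    using assms(4) by (rule integrable_mult_right)
  show "AE \<omega> in M. norm ((Z \<omega>)\<^sup>2) \<le> norm (2 / \<theta>\<^sup>2 * exp (\<theta> * Z \<omega>))"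
  proof (rule AE_I2)
    fix \<omega> assume "\<omega> \<in> space M"
    then have "0 \<le> \<theta> * Z \<omega>"
      using assms(2,3) by simp
    then have "(\<theta> * Z \<omega>)\<^sup>2 / 2 \<le> exp (\<theta> * Z \<omega>)"
      using exp_lower_Taylor_quadratic[of "\<theta> * Z \<omega>"] by linarith
    then show "norm ((Z \<omega>)\<^sup>2) \<le> norm (2 / \<theta>\<^sup>2 * exp (\<theta> * Z \<omega>))"
      using assms(3) by (simp add: field_simps power_mult_distrib)
  qed
qed (use assms(1) in simp)

lemma distributed_stat_excess_nonneg:
  assumes "distributed M lborel Y (stat_excess_density M Z)"
  shows "AE \<omega> in M. 0 \<le> Y \<omega>"
proof -
  have "AE x in distr M lborel Y. 0 \<le> x"
    unfolding distributed_distr_eq_density[OF assms] AE_density[OF distributed_borel_measurable[OF assms]]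
    by (rule AE_I2) (auto simp: stat_excess_density_def)
  then show ?thesis
    by (rule AE_distrD[OF distributed_measurable[OF assms]])
qed

context prob_space
begin

lemma nn_integral_exp_neg_le:
  fixes Z :: "'a \<Rightarrow> real"
  assumes nonneg: "\<And>\<omega>. \<omega> \<in> space M \<Longrightarrow> 0 \<le> Z \<omega>"
    and "integrable M Z" "integrable M (\<lambda>\<omega>. (Z \<omega>)\<^sup>2)" "0 \<le> \<theta>"
  shows "(\<integral>\<^sup>+\<omega>. ennreal (exp (- \<theta> * Z \<omega>)) \<partial>M)
           \<le> ennreal (exp (- \<theta> * expectation Z + \<theta>\<^sup>2 / 2 * expectation (\<lambda>\<omega>. (Z \<omega>)\<^sup>2)))"
proof -
  define q where "q \<omega> = 1 - \<theta> * Z \<omega> + \<theta>\<^sup>2 / 2 * (Z \<omega>)\<^sup>2" for \<omega>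
  have exp_le_q: "exp (- \<theta> * Z \<omega>) \<le> q \<omega>" if "\<omega> \<in> space M" for \<omega>
    using exp_neg_le_Taylor_quadratic[of "\<theta> * Z \<omega>"] nonneg[OF that] \<open>0 \<le> \<theta>\<close>
    by (simp add: q_def power_mult_distrib)
  have q_integrable: "integrable M q"
    unfolding q_def using assms(2,3) by auto
  have "(\<integral>\<^sup>+\<omega>. ennreal (exp (- \<theta> * Z \<omega>)) \<partial>M) \<le> (\<integral>\<^sup>+\<omega>. ennreal (q \<omega>) \<partial>M)"
    by (intro nn_integral_mono ennreal_leI exp_le_q)
  also have "\<dots> = ennreal (expectation q)"
    using order_trans[OF exp_ge_zero exp_le_q] by (intro nn_integral_eq_integral q_integrable AE_I2)
  also have "expectation q = 1 - \<theta> * expectation Z + \<theta>\<^sup>2 / 2 * expectation (\<lambda>\<omega>. (Z \<omega>)\<^sup>2)"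
    unfolding q_def using assms(2,3) by (simp add: prob_space)
  also have "ennreal \<dots> \<le> ennreal (exp (- \<theta> * expectation Z + \<theta>\<^sup>2 / 2 * expectation (\<lambda>\<omega>. (Z \<omega>)\<^sup>2)))"
    using exp_ge_add_one_self[of "- \<theta> * expectation Z + \<theta>\<^sup>2 / 2 * expectation (\<lambda>\<omega>. (Z \<omega>)\<^sup>2)"]
    by (intro ennreal_leI) linarith
  finally show ?thesis .
qed

lemma exists_Chernoff_rate_lt_1:
  fixes Z :: "'a \<Rightarrow> real"
  assumes "\<And>\<omega>. \<omega> \<in> space M \<Longrightarrow> 0 \<le> Z \<omega>"
    and "integrable M Z" "integrable M (\<lambda>\<omega>. (Z \<omega>)\<^sup>2)" "0 < \<epsilon>"
  shows "\<exists>\<theta>>0. \<exists>r. 0 \<le> r \<and> r < 1 \<and>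
           ennreal (exp (\<theta> * (expectation Z - \<epsilon>))) * (\<integral>\<^sup>+\<omega>. ennreal (exp (- \<theta> * Z \<omega>)) \<partial>M)
             \<le> ennreal r"
proof -
  define V where "V = expectation (\<lambda>\<omega>. (Z \<omega>)\<^sup>2)"
  define \<theta> where "\<theta> = \<epsilon> / (V + 1)"
  define r where "r = exp (- \<theta> * \<epsilon> + \<theta>\<^sup>2 / 2 * V)"
  have "0 \<le> V"
    unfolding V_def by simp
  then have "0 < \<theta>" "\<theta> * V < \<epsilon>"
    unfolding \<theta>_def using \<open>0 < \<epsilon>\<close> by (auto simp: field_simps)
  then have "\<theta> * (\<theta> * V) < \<theta> * \<epsilon>" "0 < \<theta> * \<epsilon>"
    using \<open>0 < \<epsilon>\<close> by simp_all
  moreover have "\<theta>\<^sup>2 / 2 * V = \<theta> * (\<theta> * V) / 2"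
    by (simp add: power2_eq_square)
  ultimately have "- \<theta> * \<epsilon> + \<theta>\<^sup>2 / 2 * V < 0"
    by linarith
  then have "r < 1"
    unfolding r_def by simp
  have "ennreal (exp (\<theta> * (expectation Z - \<epsilon>))) * (\<integral>\<^sup>+\<omega>. ennreal (exp (- \<theta> * Z \<omega>)) \<partial>M)
      \<le> ennreal (exp (\<theta> * (expectation Z - \<epsilon>))) * ennreal (exp (- \<theta> * expectation Z + \<theta>\<^sup>2 / 2 * V))"
    unfolding V_def using assms \<open>0 < \<theta>\<close> by (intro mult_left_mono nn_integral_exp_neg_le) auto
  also have "\<dots> = ennreal r"
    unfolding r_def by (simp add: ennreal_mult''[symmetric] exp_add[symmetric] algebra_simps)
  finally show ?thesis
    using \<open>0 < \<theta>\<close> \<open>r < 1\<close> exp_ge_zero unfolding r_def by blast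
qed

lemma nn_integral_prod_iid:
  fixes g :: "'b::topological_space \<Rightarrow> ennreal"
  assumes "indep_vars (\<lambda>_. borel) Z I" "finite J" "J \<subseteq> I"
    and "\<And>i. i \<in> J \<Longrightarrow> distr M borel (Z i) = D" "g \<in> borel_measurable borel"
  shows "(\<integral>\<^sup>+\<omega>. (\<Prod>i\<in>J. g (Z i \<omega>)) \<partial>M) = (\<integral>\<^sup>+x. g x \<partial>D) ^ card J"
proof -
  have indep_J: "indep_vars (\<lambda>_. borel) Z J"
    using assms(1,3) by (rule indep_vars_subset)
  then have "indep_vars (\<lambda>_. borel) (\<lambda>i \<omega>. g (Z i \<omega>)) J"
    using assms(5) by (rule indep_vars_compose2)
  then have "(\<integral>\<^sup>+\<omega>. (\<Prod>i\<in>J. g (Z i \<omega>)) \<partial>M) = (\<Prod>i\<in>J. \<integral>\<^sup>+\<omega>. g (Z i \<omega>) \<partial>M)"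
    using assms(2) by (intro indep_vars_nn_integral) auto
  also have "\<dots> = (\<Prod>i\<in>J. \<integral>\<^sup>+x. g x \<partial>D)"
  proof (rule prod.cong)
    fix i assume "i \<in> J"
    then have "random_variable borel (Z i)"
      using indep_J by (simp add: indep_vars_def)
    then have "(\<integral>\<^sup>+\<omega>. g (Z i \<omega>) \<partial>M) = (\<integral>\<^sup>+x. g x \<partial>distr M borel (Z i))"
      using assms(5) by (simp add: nn_integral_distr)
    then show "(\<integral>\<^sup>+\<omega>. g (Z i \<omega>) \<partial>M) = (\<integral>\<^sup>+x. g x \<partial>D)"
      using assms(4)[OF \<open>i \<in> J\<close>] by simp
  qed simp
  finally show ?thesis
    by simp
qed

lemma measurable_of_indep_vars_Some:
  assumes "indep_vars (\<lambda>_. borel) (\<lambda>i \<omega>. case i of None \<Rightarrow> W \<omega> | Some n \<Rightarrow> X n \<omega>) UNIV"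
  shows "X n \<in> borel_measurable M"
proof -
  have "random_variable borel (\<lambda>\<omega>. case Some n of None \<Rightarrow> W \<omega> | Some n \<Rightarrow> X n \<omega>)"
    using assms unfolding indep_vars_def by blast
  then show ?thesis
    by simp
qed

lemma nn_integral_prod_iid_seq:
  fixes X :: "nat \<Rightarrow> 'a \<Rightarrow> 'b::topological_space" and g :: "'b \<Rightarrow> ennreal"
  assumes indep: "indep_vars (\<lambda>_. borel) (\<lambda>i \<omega>. case i of None \<Rightarrow> W \<omega> | Some n \<Rightarrow> X n \<omega>) UNIV"
    and ident: "\<And>n. distr M borel (X n) = distr M borel (X 0)" and "g \<in> borel_measurable borel"
  shows "(\<integral>\<^sup>+\<omega>. (\<Prod>i<n. g (X i \<omega>)) \<partial>M) = (\<integral>\<^sup>+\<omega>. g (X 0 \<omega>) \<partial>M) ^ n"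
proof -
  have "random_variable borel (X 0)"
    using indep by (rule measurable_of_indep_vars_Some)
  moreover have "(\<integral>\<^sup>+\<omega>. (\<Prod>i\<in>Some ` {..<n}. g (case i of None \<Rightarrow> W \<omega> | Some n \<Rightarrow> X n \<omega>)) \<partial>M)
      = (\<integral>\<^sup>+x. g x \<partial>distr M borel (X 0)) ^ card (Some ` {..<n})"
    by (intro nn_integral_prod_iid[OF indep _ _ _ assms(3)]) (auto intro: ident)
  ultimately show ?thesis
    using assms(3) by (simp add: prod.reindex card_image nn_integral_distr)
qed

lemma nn_integral_kappa_le:
  fixes X :: "nat \<Rightarrow> 'a \<Rightarrow> real" and \<phi> :: ennreal
  assumes "0 \<le> \<theta>" "AE \<omega> in M. 0 \<le> Y s \<omega>" and [measurable]: "\<And>n. X n \<in> borel_measurable M"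
    and prod: "\<And>n. (\<integral>\<^sup>+\<omega>. (\<Prod>i<n. ennreal (exp (- \<theta> * X i \<omega>))) \<partial>M) = \<phi> ^ n"
  shows "(\<integral>\<^sup>+\<omega>. kappa X Y \<mu> \<epsilon> s \<omega> \<partial>M)
           \<le> 1 + (\<Sum>n. of_nat n * (ennreal (exp (\<theta> * (\<mu> - \<epsilon>))) * \<phi>) ^ n)"
proof -
  define c where "c = ennreal (exp (\<theta> * (\<mu> - \<epsilon>)))"
  define T where "T n \<omega> = of_nat n * c ^ n * (\<Prod>i<n. ennreal (exp (- \<theta> * X i \<omega>)))" for n \<omega>
  have T_eq: "ennreal (real n * exp (\<theta> * (real n * (\<mu> - \<epsilon>) - (\<Sum>i<n. X i \<omega>)))) = T n \<omega>" for n \<omega>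
  proof -
    have "exp (\<theta> * (real n * (\<mu> - \<epsilon>) - (\<Sum>i<n. X i \<omega>)))
          = exp (\<theta> * (\<mu> - \<epsilon>)) ^ n * (\<Prod>i<n. exp (- \<theta> * X i \<omega>))"
      by (simp add: exp_sum[symmetric] exp_of_nat_mult[symmetric] exp_add[symmetric]
          sum_negf sum_distrib_left algebra_simps)
    then show ?thesis
      by (simp add: T_def c_def ennreal_mult prod_ennreal prod_nonneg ennreal_power
          ennreal_of_nat_eq_real_of_nat mult.assoc)
  qed
  have T_integral: "(\<integral>\<^sup>+\<omega>. T n \<omega> \<partial>M) = of_nat n * c ^ n * \<phi> ^ n" for n
    unfolding T_def prod[symmetric] by (rule nn_integral_cmult) measurable
  have "AE \<omega> in M. kappa X Y \<mu> \<epsilon> s \<omega> \<le> 1 + (\<Sum>n. T n \<omega>)"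
    using assms(2)
    by eventually_elim (rule ord_le_eq_trans[OF kappa_le_Chernoff_sum[OF _ assms(1)]], simp_all add: T_eq)
  then have "(\<integral>\<^sup>+\<omega>. kappa X Y \<mu> \<epsilon> s \<omega> \<partial>M) \<le> (\<integral>\<^sup>+\<omega>. 1 + (\<Sum>n. T n \<omega>) \<partial>M)"
    by (rule nn_integral_mono_AE)
  also have "\<dots> = 1 + (\<Sum>n. \<integral>\<^sup>+\<omega>. T n \<omega> \<partial>M)"
    by (simp add: T_def nn_integral_add nn_integral_suminf emeasure_space_1)
  also have "\<dots> = 1 + (\<Sum>n. of_nat n * (c * \<phi>) ^ n)"
    by (simp add: T_integral power_mult_distrib mult.assoc)
  finally show ?thesis
    unfolding c_def .
qed

end

theorem mainTheorem12:
  fixes M :: "'a measure" and X :: "nat \<Rightarrow> 'a \<Rightarrow> real" and Y :: "nat \<Rightarrow> 'a \<Rightarrow> real"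
    and \<mu> \<epsilon> :: real
  assumes "prob_space M"
    and indep: "\<And>s. s \<ge> 1 \<Longrightarrow> prob_space.indep_vars M (\<lambda>_. borel)
                 (\<lambda>i \<omega>. case i of None \<Rightarrow> Y s \<omega> | Some n \<Rightarrow> X n \<omega>) UNIV"
    and ident: "\<And>n. distr M borel (X n) = distr M borel (X 0)"
    and pos: "\<And>n \<omega>. \<omega> \<in> space M \<Longrightarrow> X n \<omega> > 0"
    and integ: "integrable M (X 0)"
    and mean: "integral\<^sup>L M (X 0) = \<mu>"
    and \<mu>pos: "0 < \<mu>"
    and expmom: "\<exists>\<theta>>0. integrable M (\<lambda>\<omega>. exp (\<theta> * X 0 \<omega>))"
    and excess: "\<And>s. s \<ge> 1 \<Longrightarrow> distributed M lborel (Y s)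
                    (stat_excess_density M (\<lambda>\<omega>. X 0 \<omega> / real s))"
    and \<epsilon>: "0 < \<epsilon>" "\<epsilon> < \<mu>"
  shows "\<exists>C::real. eventually (\<lambda>s. (\<integral>\<^sup>+ \<omega>. kappa X Y \<mu> \<epsilon> s \<omega> \<partial>M) \<le> ennreal (C * real s))
                     sequentially"
proof -
  interpret prob_space M by fact
  have indep_1: "indep_vars (\<lambda>_. borel) (\<lambda>i \<omega>. case i of None \<Rightarrow> Y 1 \<omega> | Some n \<Rightarrow> X n \<omega>) UNIV"
    using indep[of 1] by simp
  then have X_measurable[measurable]: "X n \<in> borel_measurable M" for n
    by (rule measurable_of_indep_vars_Some)
  have X_nonneg: "0 \<le> X 0 \<omega>" if "\<omega> \<in> space M" for \<omega>
    using pos[where n = 0] that by (simp add: less_imp_le)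
  have "integrable M (\<lambda>\<omega>. (X 0 \<omega>)\<^sup>2)"
    using expmom integrable_power2_of_exp_moment[OF X_measurable X_nonneg] by blast
  then obtain \<theta> r where "0 < \<theta>" "0 \<le> r" "r < 1" and rate:
    "ennreal (exp (\<theta> * (\<mu> - \<epsilon>))) * (\<integral>\<^sup>+\<omega>. ennreal (exp (- \<theta> * X 0 \<omega>)) \<partial>M) \<le> ennreal r"
    using exists_Chernoff_rate_lt_1[OF X_nonneg integ _ \<epsilon>(1)] mean by blast
  define S where "S = (\<Sum>n. real n * r ^ n)"
  have "0 \<le> S"
    unfolding S_def using \<open>0 \<le> r\<close> \<open>r < 1\<close> by (intro suminf_nonneg summable_of_nat_mult_power) auto
  show ?thesis
  proof (intro exI[of _ "1 + S"] eventually_sequentiallyI[of 1])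
    fix s :: nat assume "1 \<le> s"
    have "(\<integral>\<^sup>+\<omega>. kappa X Y \<mu> \<epsilon> s \<omega> \<partial>M)
        \<le> 1 + (\<Sum>n. of_nat n * (ennreal (exp (\<theta> * (\<mu> - \<epsilon>))) * (\<integral>\<^sup>+\<omega>. ennreal (exp (- \<theta> * X 0 \<omega>)) \<partial>M)) ^ n)"
      using \<open>0 < \<theta>\<close> distributed_stat_excess_nonneg[OF excess[OF \<open>1 \<le> s\<close>]]
      by (intro nn_integral_kappa_le nn_integral_prod_iid_seq[OF indep_1 ident]) auto
    also have "\<dots> \<le> 1 + ennreal S"
      unfolding S_def using rate \<open>0 \<le> r\<close> \<open>r < 1\<close> by (intro add_left_mono suminf_of_nat_mult_power_le)
    also have "\<dots> = ennreal (1 + S)"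
      using \<open>0 \<le> S\<close> by simp
    also have "\<dots> \<le> ennreal ((1 + S) * real s)"
      using \<open>0 \<le> S\<close> \<open>1 \<le> s\<close> by (intro ennreal_leI) (simp add: mult_le_cancel_left1)
    finally show "(\<integral>\<^sup>+\<omega>. kappa X Y \<mu> \<epsilon> s \<omega> \<partial>M) \<le> ennreal ((1 + S) * real s)" .
  qed
qed

end
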